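(* Let $G$ be a finite group, $H\leq G$, $x\in G$ and $h\in H$. If $hS_xh^{-1}=S_x$, then $h\in H_x$. In particular, if $hS_xh^{-1}\cap S_x\neq\varnothing$ then $h\in H_x$.
   Context: For $x\in G$, $H_x=\bigcap_{i\in\mathbb{Z}}x^iHx^{-i}$ and $S_x=H_x\cdot x\subseteq G$. *)

theory Defs
  imports "HOL-Algebra.Algebra"
begin

definition Hx :: "('a, 'b) monoid_scheme \<Rightarrow> 'a set \<Rightarrow> 'a \<Rightarrow> 'a set" where
  "Hx G H x = (\<Inter>i::int. r_coset G (l_coset G (x [^]\<^bsub>G\<^esub> i) H) (inv\<^bsub>G\<^esub> (x [^]\<^bsub>G\<^esub> i)))"

definition Sx :: "('a, 'b) monoid_scheme \<Rightarrow> 'a set \<Rightarrow> 'a \<Rightarrow> 'a set" where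
  "Sx G H x = r_coset G (Hx G H x) x"

end

theory Submission
  imports Defs
begin

(* Write K = H_x and c for conjugation by x. Since K is a subgroup normalised by x, the powers
   of c map K-double cosets to K-double cosets. If h S_x h^-1 meets S_x, then h k x h^-1 = k' x
   with k, k' in K, i.e. c(h) = k'^-1 h k lies in KhK. Hence c^i(h) lies in KhK, which is
   contained in H, for every integer i; that is, h is in H_x. *)

context group
begin

lemma inv_mult_cancel_left [simp]:
  "a \<in> carrier G \<Longrightarrow> b \<in> carrier G \<Longrightarrow> inv a \<otimes> (a \<otimes> b) = b"
  by (simp add: m_assoc [symmetric])

lemma mult_inv_cancel_left [simp]:
  "a \<in> carrier G \<Longrightarrow> b \<in> carrier G \<Longrightarrow> a \<otimes> (inv a \<otimes> b) = b"
  by (simp add: m_assoc [symmetric])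

definition conj_pow :: "'a \<Rightarrow> int \<Rightarrow> 'a \<Rightarrow> 'a" where
  "conj_pow x i g = x [^] i \<otimes> g \<otimes> inv (x [^] i)"

lemma conj_pow_closed [simp]:
  "x \<in> carrier G \<Longrightarrow> g \<in> carrier G \<Longrightarrow> conj_pow x i g \<in> carrier G"
  unfolding conj_pow_def by simp

lemma conj_pow_zero [simp]: "g \<in> carrier G \<Longrightarrow> conj_pow x 0 g = g"
  unfolding conj_pow_def by simp

lemma conj_pow_one [simp]: "x \<in> carrier G \<Longrightarrow> conj_pow x i \<one> = \<one>"
  unfolding conj_pow_def by simp

lemma conj_pow_conj_pow:
  assumes "x \<in> carrier G" "g \<in> carrier G"
  shows "conj_pow x i (conj_pow x j g) = conj_pow x (i + j) g"
  using assms unfolding conj_pow_def by (simp add: int_pow_mult inv_mult_group m_assoc)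

lemma conj_pow_mult:
  assumes "x \<in> carrier G" "a \<in> carrier G" "b \<in> carrier G"
  shows "conj_pow x i (a \<otimes> b) = conj_pow x i a \<otimes> conj_pow x i b"
  using assms unfolding conj_pow_def by (simp add: m_assoc)

lemma conj_pow_inv:
  assumes "x \<in> carrier G" "a \<in> carrier G"
  shows "conj_pow x i (inv a) = inv (conj_pow x i a)"
  using assms unfolding conj_pow_def by (simp add: inv_mult_group m_assoc)

definition double_coset :: "'a set \<Rightarrow> 'a \<Rightarrow> 'a set" where
  "double_coset K g = {a \<otimes> g \<otimes> b | a b. a \<in> K \<and> b \<in> K}"

lemma double_coset_self:
  "subgroup K G \<Longrightarrow> g \<in> carrier G \<Longrightarrow> g \<in> double_coset K g"
  unfolding double_coset_def by (force intro: subgroup.one_closed)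

lemma double_coset_trans:
  assumes K: "subgroup K G" and h: "h \<in> carrier G" and g: "g \<in> double_coset K h"
  shows "double_coset K g \<subseteq> double_coset K h"
proof
  fix y assume "y \<in> double_coset K g"
  then obtain a b where ab: "a \<in> K" "b \<in> K" "y = a \<otimes> g \<otimes> b"
    unfolding double_coset_def by blast
  obtain c d where cd: "c \<in> K" "d \<in> K" "g = c \<otimes> h \<otimes> d"
    using g unfolding double_coset_def by blast
  have "y = (a \<otimes> c) \<otimes> h \<otimes> (d \<otimes> b)"
    using ab cd h subgroup.mem_carrier[OF K] by (simp add: m_assoc)
  then show "y \<in> double_coset K h"
    unfolding double_coset_def using ab cd subgroup.m_closed[OF K] by blast
qed

lemma double_coset_sym:
  assumes K: "subgroup K G" and h: "h \<in> carrier G" and g: "g \<in> double_coset K h"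
  shows "h \<in> double_coset K g"
proof -
  obtain a b where ab: "a \<in> K" "b \<in> K" "g = a \<otimes> h \<otimes> b"
    using g unfolding double_coset_def by blast
  then have "h = inv a \<otimes> g \<otimes> inv b"
    using h subgroup.mem_carrier[OF K] by (simp add: m_assoc)
  then show ?thesis
    unfolding double_coset_def using ab subgroup.m_inv_closed[OF K] by blast
qed

lemma double_coset_subset:
  assumes "subgroup H G" "K \<subseteq> H" "h \<in> H"
  shows "double_coset K h \<subseteq> H"
  using assms unfolding double_coset_def by (auto intro: subgroup.m_closed)

lemma conj_pow_double_coset:
  assumes x: "x \<in> carrier G" and K: "K \<subseteq> carrier G"
    and K_inv: "\<And>k. k \<in> K \<Longrightarrow> conj_pow x i k \<in> K"
    and h: "h \<in> carrier G" and g: "g \<in> double_coset K h"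
  shows "conj_pow x i g \<in> double_coset K (conj_pow x i h)"
proof -
  obtain a b where ab: "a \<in> K" "b \<in> K" "g = a \<otimes> h \<otimes> b"
    using g unfolding double_coset_def by blast
  then have "conj_pow x i g = conj_pow x i a \<otimes> conj_pow x i h \<otimes> conj_pow x i b"
    using x h ab K by (auto simp: conj_pow_mult m_closed subsetD)
  then show ?thesis
    unfolding double_coset_def using ab K_inv by blast
qed

lemma conj_pow_mult_in_double_coset:
  assumes K: "subgroup K G" and x: "x \<in> carrier G"
    and K_inv: "\<And>i k. k \<in> K \<Longrightarrow> conj_pow x i k \<in> K"
    and h: "h \<in> carrier G" and step: "conj_pow x e h \<in> double_coset K h"
  shows "conj_pow x (e * int n) h \<in> double_coset K h"
proof (induction n)
  case 0
  show ?case using double_coset_self[OF K h] h by simp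
next
  case (Suc n)
  have "conj_pow x (e * int (Suc n)) h = conj_pow x (e * int n) (conj_pow x e h)"
    using conj_pow_conj_pow[OF x h] by (simp add: algebra_simps)
  also have "\<dots> \<in> double_coset K (conj_pow x (e * int n) h)"
    using conj_pow_double_coset[OF x subgroup.subset[OF K] K_inv h step] .
  also have "\<dots> \<subseteq> double_coset K h"
    using double_coset_trans[OF K h Suc.IH] .
  finally show ?case .
qed

lemma conj_pow_neg_in_double_coset:
  assumes K: "subgroup K G" and x: "x \<in> carrier G"
    and K_inv: "\<And>i k. k \<in> K \<Longrightarrow> conj_pow x i k \<in> K"
    and h: "h \<in> carrier G" and step: "conj_pow x e h \<in> double_coset K h"
  shows "conj_pow x (- e) h \<in> double_coset K h"
proof -
  have "h = conj_pow x (- e) (conj_pow x e h)"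
    using conj_pow_conj_pow[OF x h] h by simp
  also have "\<dots> \<in> double_coset K (conj_pow x (- e) h)"
    using conj_pow_double_coset[OF x subgroup.subset[OF K] K_inv h step] .
  finally show ?thesis
    using double_coset_sym[OF K] x h by simp
qed

lemma conj_pow_in_double_coset:
  assumes K: "subgroup K G" and x: "x \<in> carrier G"
    and K_inv: "\<And>i k. k \<in> K \<Longrightarrow> conj_pow x i k \<in> K"
    and h: "h \<in> carrier G" and step: "conj_pow x 1 h \<in> double_coset K h"
  shows "conj_pow x i h \<in> double_coset K h"
proof (cases "i \<ge> 0")
  case True
  then show ?thesis
    using conj_pow_mult_in_double_coset[OF K x K_inv h step, of "nat i"] by simp
next
  case False
  have "conj_pow x (-1) h \<in> double_coset K h"
    using conj_pow_neg_in_double_coset[OF K x K_inv h step] .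
  then show ?thesis
    using False conj_pow_mult_in_double_coset[OF K x K_inv h, of "-1" "nat (- i)"] by simp
qed

lemma mem_conjugate_iff:
  assumes "a \<in> carrier G" "H \<subseteq> carrier G"
  shows "g \<in> (a <# H) #> inv a \<longleftrightarrow> g \<in> carrier G \<and> inv a \<otimes> g \<otimes> a \<in> H"
  using assms unfolding l_coset_def r_coset_def
  by (force simp: m_assoc)

lemma Hx_iff:
  assumes H: "subgroup H G" and x: "x \<in> carrier G"
  shows "g \<in> Hx G H x \<longleftrightarrow> g \<in> carrier G \<and> (\<forall>i. conj_pow x i g \<in> H)"
proof -
  have "g \<in> Hx G H x \<longleftrightarrow> g \<in> carrier G \<and> (\<forall>i. conj_pow x (- i) g \<in> H)"
    unfolding Hx_def conj_pow_def
    using mem_conjugate_iff[OF int_pow_closed[OF x] subgroup.subset[OF H]] x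
    by (simp add: int_pow_neg)
  also have "\<dots> \<longleftrightarrow> g \<in> carrier G \<and> (\<forall>i. conj_pow x i g \<in> H)"
    by (metis minus_minus)
  finally show ?thesis .
qed

lemma Hx_subset: "subgroup H G \<Longrightarrow> x \<in> carrier G \<Longrightarrow> Hx G H x \<subseteq> H"
  using Hx_iff conj_pow_zero by (metis subsetI)

lemma conj_pow_Hx:
  assumes H: "subgroup H G" and x: "x \<in> carrier G" and k: "k \<in> Hx G H x"
  shows "conj_pow x i k \<in> Hx G H x"
  using k conj_pow_conj_pow[OF x] x unfolding Hx_iff[OF H x] by auto

lemma subgroup_Hx:
  assumes H: "subgroup H G" and x: "x \<in> carrier G"
  shows "subgroup (Hx G H x) G"
proof (rule subgroupI)
  show "Hx G H x \<subseteq> carrier G"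
    using Hx_iff[OF H x] by blast
  have "\<one> \<in> Hx G H x"
    using Hx_iff[OF H x] x subgroup.one_closed[OF H] by simp
  then show "Hx G H x \<noteq> {}" by blast
  show "inv a \<in> Hx G H x" if "a \<in> Hx G H x" for a
    using that unfolding Hx_iff[OF H x] by (simp add: conj_pow_inv x subgroup.m_inv_closed[OF H])
  show "a \<otimes> b \<in> Hx G H x" if "a \<in> Hx G H x" "b \<in> Hx G H x" for a b
    using that unfolding Hx_iff[OF H x] by (simp add: conj_pow_mult x subgroup.m_closed[OF H])
qed

lemma mem_Sx_iff: "g \<in> Sx G H x \<longleftrightarrow> (\<exists>k \<in> Hx G H x. g = k \<otimes> x)"
  unfolding Sx_def r_coset_def by blast

lemma conj_pow_in_Hx_double_coset:
  assumes H: "subgroup H G" and x: "x \<in> carrier G" and h: "h \<in> carrier G"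
    and meet: "((h <# Sx G H x) #> inv h) \<inter> Sx G H x \<noteq> {}"
  shows "conj_pow x 1 h \<in> double_coset (Hx G H x) h"
proof -
  obtain k k' where k: "k \<in> Hx G H x" and k': "k' \<in> Hx G H x"
    and eq: "h \<otimes> (k \<otimes> x) \<otimes> inv h = k' \<otimes> x"
    using meet unfolding Sx_def l_coset_def r_coset_def by blast
  have kc: "k \<in> carrier G" and k'c: "k' \<in> carrier G"
    using k k' subgroup.mem_carrier[OF subgroup_Hx[OF H x]] by auto
  have "x \<otimes> h = inv k' \<otimes> (h \<otimes> (k \<otimes> x) \<otimes> inv h) \<otimes> h"
    using eq x h kc k'c by (simp add: m_assoc)
  also have "\<dots> = inv k' \<otimes> h \<otimes> k \<otimes> x"
    using x h kc k'c by (simp add: m_assoc)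
  finally have "conj_pow x 1 h = inv k' \<otimes> h \<otimes> k"
    unfolding conj_pow_def using x h kc k'c by (simp add: inv_solve_right m_assoc)
  then show ?thesis
    unfolding double_coset_def
    using k k' subgroup.m_inv_closed[OF subgroup_Hx[OF H x]] by blast
qed

lemma in_Hx_if_conjugate_meets_Sx:
  assumes H: "subgroup H G" and x: "x \<in> carrier G" and h: "h \<in> H"
    and meet: "((h <# Sx G H x) #> inv h) \<inter> Sx G H x \<noteq> {}"
  shows "h \<in> Hx G H x"
proof -
  have hc: "h \<in> carrier G" using h subgroup.mem_carrier[OF H] by blast
  have "conj_pow x i h \<in> double_coset (Hx G H x) h" for i
    using conj_pow_in_double_coset[OF subgroup_Hx[OF H x] x conj_pow_Hx[OF H x] hc
        conj_pow_in_Hx_double_coset[OF H x hc meet]] .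
  then have "conj_pow x i h \<in> H" for i
    using double_coset_subset[OF H Hx_subset[OF H x] h] by blast
  then show ?thesis using Hx_iff[OF H x] hc by blast
qed

lemma x_in_Sx: "subgroup H G \<Longrightarrow> x \<in> carrier G \<Longrightarrow> x \<in> Sx G H x"
  unfolding mem_Sx_iff using subgroup.one_closed[OF subgroup_Hx] by force

end

theorem lemma4p4:
  fixes G (structure) and H :: "'a set" and x h :: 'a
  assumes "group G" and "finite (carrier G)" and "subgroup H G"
    and "x \<in> carrier G" and "h \<in> H"
  shows "(r_coset G (l_coset G h (Sx G H x)) (inv h) = Sx G H x \<longrightarrow> h \<in> Hx G H x)
       \<and> (r_coset G (l_coset G h (Sx G H x)) (inv h) \<inter> Sx G H x \<noteq> {} \<longrightarrow> h \<in> Hx G H x)"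
proof -
  interpret group G by fact
  have "x \<in> Sx G H x" using x_in_Sx assms(3,4) .
  then show ?thesis
    using in_Hx_if_conjugate_meets_Sx[OF assms(3-5)] by blast
qed

end
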